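(* Let $q>0$. For every integer $j\ge1$, $$\frac{(-1)^j}{j!}\frac{d}{dq}\tilde\gamma_j(q)=-\sum_{k=j-1}^\infty\frac{(-1)^k}{k!}\binom{k+1}{j}\tilde\gamma_k(q),$$ and $$-\tilde\psi'(q)=-\sum_{k=0}^\infty\frac{(-1)^k}{k!}\tilde\gamma_k(q).$$
   Context: For $q>0$, $\zeta_E(z,q)=\sum_{n=0}^\infty (-1)^n (n+q)^{-z}$ for $\mathrm{Re}(z)>0$, extended by analytic continuation to an entire function of $z$. The modified Stieltjes constants $\tilde\gamma_k(q)$ are defined by the Taylor expansion $\zeta_E(z,q)=\sum_{k=0}^\infty\frac{(-1)^k\tilde\gamma_k(q)}{k!}(z-1)^k$. The modified digamma function is $\tilde\psi(q):=-\tilde\gamma_0(q)=-\zeta_E(1,q)$. *)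

theory Defs
  imports "HOL-Complex_Analysis.Complex_Analysis"
begin

definition zetaE :: "complex \<Rightarrow> real \<Rightarrow> complex" where
  "zetaE z q = (THE f. f holomorphic_on UNIV \<and>
      (\<forall>w. 0 < Re w \<longrightarrow>
         (\<lambda>n. (-1) ^ n * (of_real (real n + q)) powr (- w)) sums f w)) z"

text \<open>Modified Stieltjes constants: zeta_E(z,q) = sum_k (-1)^k gt_k(q)/k! (z-1)^k,
  i.e. gt_k(q) = (-1)^k times the k-th z-derivative of zeta_E at z = 1.\<close>
definition gamma_tilde :: "nat \<Rightarrow> real \<Rightarrow> complex" where
  "gamma_tilde k q = (-1) ^ k * (deriv ^^ k) (\<lambda>z. zetaE z q) 1"

definition psi_tilde :: "real \<Rightarrow> complex" where
  "psi_tilde q = - gamma_tilde 0 q"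

end

theory Submission
  imports Defs
begin

text \<open>
  The alternating series for zeta_E(z,q) is continued to all z by Euler's transformation: for the
  iterated differences phi_k = (-Delta)^k (y powr -z), summation by parts gives
  sum (-1)^n phi_k(n+q) = (phi_k(q) + sum (-1)^n phi_(k+1)(n+q)) / 2, and phi_k(y) = O(y powr -(Re z + k)),
  so k steps of this identity express zeta_E by a series that converges for Re z + k > 1.
  For Re z > 0 the defining series may be differentiated termwise in q, which gives
  d/dq zeta_E(z,q) = -z zeta_E(z+1,q). The difference quotients in q converge uniformly for z near 1,
  hence so do their z-derivatives, and Leibniz' rule yields
  d/dq gamma~_j(q) = (-1)^(j+1) (zeta_E^(j)(2,q) + j zeta_E^(j-1)(2,q)).
  Expanding these derivatives at 2 into their Taylor series at 1, whose coefficients are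
  (-1)^k gamma~_k(q) / k!, gives both identities; the second one is the case j = 0.
\<close>

section \<open>Iterated differences of y powr -z\<close>

lemma vector_differentiable_bound:
  fixes f :: "real \<Rightarrow> 'b::real_normed_vector"
  assumes "convex S"
    and "\<And>x. x \<in> S \<Longrightarrow> (f has_vector_derivative f' x) (at x within S)"
    and "\<And>x. x \<in> S \<Longrightarrow> norm (f' x) \<le> B" and "x \<in> S" "y \<in> S"
  shows "norm (f x - f y) \<le> B * \<bar>x - y\<bar>"
  using differentiable_bound[of S f "\<lambda>x h. h *\<^sub>R f' x" B x y] assms
  by (simp add: has_vector_derivative_def onorm_scaleR_left onorm_id)

lemma powr_neg_shift_le:
  fixes a y s b B :: real
  assumes "a > 0" "a \<le> y" "y \<le> s" "s \<le> y + 1" "\<bar>b\<bar> \<le> B"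
  shows "s powr (-b) \<le> (1 + 1/a) powr B * y powr (-b)"
proof (cases "b \<ge> 0")
  case True
  have "s powr (-b) \<le> y powr (-b)" using assms True by (intro powr_mono2') auto
  moreover have "1 \<le> (1 + 1/a) powr B" using assms by (intro ge_one_powr_ge_zero) auto
  ultimately show ?thesis
    by (smt (verit, best) mult_le_cancel_right1 powr_ge_zero)
next
  case False
  have "y > 0" using assms by auto
  have "s powr (-b) \<le> (y + 1) powr (-b)"
    using assms False by (intro powr_mono2) auto
  also have "y + 1 = y * (1 + 1/y)"
    using \<open>y > 0\<close> by (simp add: field_simps)
  also have "(y * (1 + 1/y)) powr (-b) = y powr (-b) * (1 + 1/y) powr (-b)"
    using \<open>y > 0\<close> by (simp add: powr_mult)
  also have "(1 + 1/y) powr (-b) \<le> (1 + 1/a) powr (-b)"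
    using assms False \<open>y > 0\<close> by (intro powr_mono2) (auto simp: frac_le)
  also have "(1 + 1/a) powr (-b) \<le> (1 + 1/a) powr B"
    using assms False by (intro powr_mono) auto
  finally show ?thesis
    using \<open>y > 0\<close> by (simp add: mult.commute mult_left_mono)
qed

lemma powr_neg_le_add:
  fixes y :: real
  assumes "y > 0" "s \<le> e" "e \<le> S"
  shows "y powr (-e) \<le> y powr (-s) + y powr (-S)"
proof (cases "y \<ge> 1")
  case True
  then have "y powr (-e) \<le> y powr (-s)"
    using assms by (intro powr_mono) auto
  then show ?thesis
    by (smt (verit) powr_ge_zero)
next
  case False
  then have "y powr (-e) \<le> y powr (-S)"
    using assms by (intro powr_mono') auto
  then show ?thesis
    by (smt (verit) powr_ge_zero)
qed

lemma summable_shifted_powr: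
  fixes a s :: real
  assumes "a > 0" "s > 1"
  shows "summable (\<lambda>n. (real n + a) powr (-s))"
proof (rule summable_comparison_test_ev)
  show "summable (\<lambda>n. real n powr (-s))"
    using assms by (simp add: summable_real_powr_iff)
  show "\<forall>\<^sub>F n in sequentially. norm ((real n + a) powr (-s)) \<le> real n powr (-s)"
    using eventually_ge_at_top[of "1::nat"]
    by eventually_elim (use assms in \<open>auto intro!: powr_mono2'\<close>)
qed

fun powr_diff :: "nat \<Rightarrow> complex \<Rightarrow> real \<Rightarrow> complex" where
  "powr_diff 0 z y = of_real y powr (-z)"
| "powr_diff (Suc k) z y = powr_diff k z y - powr_diff k z (y + 1)"

lemma has_vector_derivative_of_real_powr:
  fixes z :: complex
  assumes "y > 0"
  shows "((\<lambda>y. of_real y powr (-z)) has_vector_derivative (-z * of_real y powr (-z - 1))) (at y)"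
proof -
  have "(of_real y :: complex) \<notin> \<real>\<^sub>\<le>\<^sub>0"
    using assms by (auto simp: nonpos_Reals_def)
  then have "((\<lambda>w::complex. w powr (-z)) has_field_derivative (-z * of_real y powr (-z - 1))) (at (of_real y))"
    by (rule has_field_derivative_powr)
  from field_vector_diff_chain_at[OF has_vector_derivative_of_real[OF DERIV_ident] this]
  show ?thesis by (simp add: o_def)
qed

lemma powr_diff_has_vector_derivative:
  assumes "c + y > 0"
  shows "((\<lambda>y. powr_diff k z (c + y)) has_vector_derivative (-z * powr_diff k (z + 1) (c + y))) (at y)"
  using assms
proof (induction k arbitrary: c)
  case 0
  have "((\<lambda>y. c + y) has_vector_derivative 1) (at y)"
    by (auto intro!: derivative_eq_intros)
  from vector_diff_chain_at[OF this has_vector_derivative_of_real_powr[OF 0]] show ?case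
    by (simp add: o_def diff_add_eq_diff_diff_swap)
next
  case (Suc k)
  have "((\<lambda>y. powr_diff k z (c + y) - powr_diff k z ((c + 1) + y)) has_vector_derivative
      (-z * powr_diff k (z + 1) (c + y) - -z * powr_diff k (z + 1) ((c + 1) + y))) (at y)"
    using Suc by (intro has_vector_derivative_diff Suc.IH) auto
  then show ?case
    by (simp add: algebra_simps)
qed

lemma powr_diff_holomorphic: "(\<lambda>z. powr_diff k z y) holomorphic_on S"
  by (induction k arbitrary: y) (auto intro!: holomorphic_intros)

lemma norm_powr_diff_Suc_le:
  assumes "a > 0" "a \<le> y" "norm z \<le> R" "C \<ge> 0"
    and bound: "\<And>w s. norm w \<le> R + 1 \<Longrightarrow> a \<le> s \<Longrightarrow>
      norm (powr_diff k w s) \<le> C * s powr (-(Re w + real k))"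
  shows "norm (powr_diff (Suc k) z y) \<le>
           max R 0 * C * (1 + 1/a) powr (R + 1 + real k) * y powr (-(Re z + real (Suc k)))"
proof -
  define M where "M = (1 + 1/a) powr (R + 1 + real k)"
  let ?P = "y powr (-(Re z + real (Suc k)))"
  have "norm (powr_diff k z (y + 1) - powr_diff k z y) \<le> max R 0 * C * M * ?P * \<bar>(y + 1) - y\<bar>"
  proof (rule vector_differentiable_bound[where S="{y..y+1}" and f'="\<lambda>s. -z * powr_diff k (z + 1) s"])
    fix s assume s: "s \<in> {y..y+1}"
    then have "0 < 0 + s"
      using assms by simp
    from powr_diff_has_vector_derivative[OF this, of k z]
    have "(powr_diff k z has_vector_derivative - z * powr_diff k (z + 1) s) (at s)"
      by simp
    then show "(powr_diff k z has_vector_derivative - z * powr_diff k (z + 1) s) (at s within {y..y+1})"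
      by (rule has_vector_derivative_at_within)
    have "norm (z + 1) \<le> R + 1"
      using assms(3) norm_triangle_ineq[of z 1] by simp
    then have "norm (powr_diff k (z + 1) s) \<le> C * s powr (-(Re (z + 1) + real k))"
      using bound[of "z + 1" s] s assms(2) by simp
    also have "Re (z + 1) + real k = Re z + real (Suc k)"
      by simp
    also have "s powr (-(Re z + real (Suc k))) \<le> M * ?P"
      unfolding M_def using s assms(3) abs_Re_le_cmod[of z]
      by (intro powr_neg_shift_le[OF assms(1,2)]) auto
    finally have "norm (powr_diff k (z + 1) s) \<le> C * (M * ?P)"
      using assms(4) by (simp add: mult_left_mono)
    then have "norm z * norm (powr_diff k (z + 1) s) \<le> max R 0 * (C * (M * ?P))"
      using assms(3) by (intro mult_mono) auto
    then show "norm (-z * powr_diff k (z + 1) s) \<le> max R 0 * C * M * ?P"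
      by (simp add: norm_mult mult_ac)
  qed auto
  then show ?thesis
    by (simp add: norm_minus_commute M_def)
qed

lemma norm_powr_diff_le:
  assumes "a > 0"
  shows "\<exists>C\<ge>0. \<forall>z y. norm z \<le> R \<longrightarrow> a \<le> y \<longrightarrow>
           norm (powr_diff k z y) \<le> C * y powr (-(Re z + real k))"
proof (induction k arbitrary: R)
  case 0
  show ?case
    by (rule exI[of _ 1]) (use assms in \<open>auto simp: norm_powr_real_powr\<close>)
next
  case (Suc k)
  obtain C where "C \<ge> 0"
    "\<And>z y. norm z \<le> R + 1 \<Longrightarrow> a \<le> y \<Longrightarrow> norm (powr_diff k z y) \<le> C * y powr (-(Re z + real k))"
    using Suc.IH[of "R + 1"] by blast
  with norm_powr_diff_Suc_le[OF assms] show ?case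
    by (intro exI[of _ "max R 0 * C * (1 + 1/a) powr (R + 1 + real k)"]) auto
qed

lemma powr_diff_majorant:
  assumes "a > 0" "s > 1"
  shows "\<exists>h. summable h \<and> (\<forall>n. 0 \<le> h n) \<and>
           (\<forall>n z y. norm z \<le> R \<longrightarrow> s \<le> Re z + real k \<longrightarrow> a \<le> y \<longrightarrow>
              norm (powr_diff k z (real n + y)) \<le> h n)"
proof -
  obtain C where C: "C \<ge> 0" "\<And>z y. norm z \<le> R \<Longrightarrow> a \<le> y \<Longrightarrow>
      norm (powr_diff k z y) \<le> C * y powr (-(Re z + real k))"
    using norm_powr_diff_le[OF assms(1), of R k] by blast
  define S where "S = max s (R + real k)"
  define h where "h n = C * ((real n + a) powr (-s) + (real n + a) powr (-S))" for n
  have "norm (powr_diff k z (real n + y)) \<le> h n"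
    if z: "norm z \<le> R" and s: "s \<le> Re z + real k" and y: "a \<le> y" for n z y
  proof -
    have "Re z + real k \<le> S"
      unfolding S_def using z abs_Re_le_cmod[of z] by linarith
    have "norm (powr_diff k z (real n + y)) \<le> C * (real n + y) powr (-(Re z + real k))"
      using C(2) z y by simp
    also have "\<dots> \<le> C * ((real n + y) powr (-s) + (real n + y) powr (-S))"
      using C(1) powr_neg_le_add[OF _ s \<open>Re z + real k \<le> S\<close>, of "real n + y"] y assms
      by (intro mult_left_mono) auto
    also have "\<dots> \<le> h n"
      unfolding h_def using C(1) y assms s \<open>Re z + real k \<le> S\<close>
      by (intro mult_left_mono add_mono powr_mono2') auto
    finally show ?thesis .
  qed
  moreover have "summable h"
    unfolding h_def S_def using assms by (intro summable_mult summable_add summable_shifted_powr) auto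
  moreover have "0 \<le> h n" for n
    unfolding h_def using C(1) by simp
  ultimately show ?thesis
    by blast
qed

lemma powr_diff_tendsto_zero:
  assumes "t > 0" "Re z + real k > 0"
  shows "(\<lambda>n. powr_diff k z (real n + t)) \<longlonglongrightarrow> 0"
proof -
  from norm_powr_diff_le[OF assms(1), of "norm z" k] obtain C where
    C: "\<forall>w y. norm w \<le> norm z \<longrightarrow> t \<le> y \<longrightarrow> norm (powr_diff k w y) \<le> C * y powr (-(Re w + real k))"
    by blast
  have "filterlim (\<lambda>n. real n + t) at_top sequentially"
    by real_asymp
  then have "(\<lambda>n. (real n + t) powr (-(Re z + real k))) \<longlonglongrightarrow> 0"
    using assms by (intro tendsto_neg_powr) auto
  from tendsto_mult_right_zero[OF this, of C] show ?thesis
    by (rule Lim_null_comparison[OF always_eventually, rotated]) (use C in auto)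
qed

section \<open>Euler's transformation and the continuation of zeta_E\<close>

lemma sums_alternating_eq_half:
  fixes h :: "nat \<Rightarrow> 'a::real_normed_field"
  assumes "h \<longlonglongrightarrow> 0" "(\<lambda>n. (-1) ^ n * (h n - h (Suc n))) sums B"
  shows "(\<lambda>n. (-1) ^ n * h n) sums ((h 0 + B) / 2)"
proof -
  have "2 * (\<Sum>i<N. (-1) ^ i * h i) =
      h 0 + (\<Sum>i<N. (-1) ^ i * (h i - h (Suc i))) - (-1) ^ N * h N" for N
    by (induction N) (auto simp: algebra_simps)
  then have partial_sum: "(\<Sum>i<N. (-1) ^ i * h i) =
      (h 0 + (\<Sum>i<N. (-1) ^ i * (h i - h (Suc i))) - (-1) ^ N * h N) / 2" for N
    by (metis nonzero_mult_div_cancel_left zero_neq_numeral)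
  have "(\<lambda>N. (-1) ^ N * h N) \<longlonglongrightarrow> 0"
    by (rule tendsto_norm_zero_cancel)
      (use tendsto_norm_zero[OF assms(1)] in \<open>simp add: norm_mult norm_power\<close>)
  then have "(\<lambda>N. (h 0 + (\<Sum>i<N. (-1) ^ i * (h i - h (Suc i))) - (-1) ^ N * h N) / 2)
      \<longlonglongrightarrow> (h 0 + B - 0) / 2"
    using assms(2) unfolding sums_def by (intro tendsto_intros) auto
  then show ?thesis
    unfolding sums_def partial_sum by simp
qed

definition alt_powr_diff :: "nat \<Rightarrow> complex \<Rightarrow> real \<Rightarrow> complex" where
  "alt_powr_diff k z t = (\<Sum>n. (-1) ^ n * powr_diff k z (real n + t))"

lemma summable_norm_alt_powr_diff:
  assumes "t > 0" "Re z + real k > 1"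
  shows "summable (\<lambda>n. norm ((-1) ^ n * powr_diff k z (real n + t)))"
proof -
  obtain h where h: "summable h" "\<And>n. norm (powr_diff k z (real n + t)) \<le> h n"
    using powr_diff_majorant[OF assms(1,2), of "norm z" k] by auto
  show ?thesis
    by (rule summable_comparison_test'[of h 0]) (use h in \<open>auto simp: norm_mult norm_power\<close>)
qed

lemma sums_alt_powr_diff_half:
  assumes "t > 0" "Re z + real k > 0"
  shows "(\<lambda>n. (-1) ^ n * powr_diff k z (real n + t)) sums
           ((powr_diff k z t + alt_powr_diff (Suc k) z t) / 2)"
proof -
  have "summable (\<lambda>n. (-1) ^ n * powr_diff (Suc k) z (real n + t))"
    using assms by (intro summable_norm_cancel[OF summable_norm_alt_powr_diff]) auto
  then have "(\<lambda>n. (-1) ^ n * powr_diff (Suc k) z (real n + t)) sums alt_powr_diff (Suc k) z t"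
    unfolding alt_powr_diff_def by (rule summable_sums)
  moreover have "powr_diff (Suc k) z (real n + t) =
      powr_diff k z (real n + t) - powr_diff k z (real (Suc n) + t)" for n
    by (simp add: add_ac)
  ultimately have "(\<lambda>n. (-1) ^ n * (powr_diff k z (real n + t) - powr_diff k z (real (Suc n) + t)))
      sums alt_powr_diff (Suc k) z t"
    by simp
  from sums_alternating_eq_half[OF powr_diff_tendsto_zero[OF assms] this] show ?thesis
    by simp
qed

(* Euler's transformation of the alternating series, stopped after K steps of
   sums_alt_powr_diff_half. *)
definition euler_sum :: "nat \<Rightarrow> complex \<Rightarrow> real \<Rightarrow> complex" where
  "euler_sum K z t = (\<Sum>k<K. powr_diff k z t / 2 ^ (k + 1)) + alt_powr_diff K z t / 2 ^ K"

lemma euler_sum_Suc: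
  assumes "t > 0" "Re z + real K > 1"
  shows "euler_sum (Suc K) z t = euler_sum K z t"
proof -
  have "alt_powr_diff K z t = (powr_diff K z t + alt_powr_diff (Suc K) z t) / 2"
    using sums_unique[OF sums_alt_powr_diff_half[OF assms(1), of z K]] assms
    unfolding alt_powr_diff_def[of K] by auto
  then have "powr_diff K z t + alt_powr_diff (Suc K) z t = 2 * alt_powr_diff K z t"
    by (simp add: mult.commute)
  then have "euler_sum (Suc K) z t =
      (\<Sum>k<K. powr_diff k z t / 2 ^ (k + 1)) + 2 * alt_powr_diff K z t / 2 ^ Suc K"
    by (simp add: euler_sum_def add_divide_distrib[symmetric] add.assoc)
  then show ?thesis
    by (simp add: euler_sum_def)
qed

lemma euler_sum_eq:
  assumes "t > 0" "Re z + real K > 1" "Re z + real K' > 1"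
  shows "euler_sum K z t = euler_sum K' z t"
proof -
  have shift: "euler_sum (L + m) z t = euler_sum L z t" if "Re z + real L > 1" for L m
    by (induction m) (use that euler_sum_Suc[OF assms(1)] in auto)
  show ?thesis
  proof (cases "K \<le> K'")
    case True
    then show ?thesis
      using shift[OF assms(2), of "K' - K"] by simp
  next
    case False
    then show ?thesis
      using shift[OF assms(3), of "K - K'"] by simp
  qed
qed

lemma sums_euler_sum_1:
  assumes "t > 0" "Re z > 0"
  shows "(\<lambda>n. (-1) ^ n * of_real (real n + t) powr (-z)) sums euler_sum 1 z t"
  using sums_alt_powr_diff_half[OF assms(1), of z 0] assms
  by (simp add: euler_sum_def add_divide_distrib)

lemma powr_diff_locally_dominated:
  assumes "t > 0" "1 < Re x + real N"
  shows "\<exists>d h. 0 < d \<and> summable h \<and> range h \<subseteq> \<real>\<^sub>\<ge>\<^sub>0 \<and>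
           (\<forall>n. \<forall>y\<in>ball x d. cmod ((-1) ^ n * powr_diff N y (real n + t)) \<le> cmod (h n))"
proof -
  define d where "d = (Re x + real N - 1) / 2"
  have "d > 0"
    using assms(2) by (simp add: d_def)
  then obtain h where h: "summable h" "\<And>n. 0 \<le> h n"
    "\<And>n z y. norm z \<le> norm x + d \<Longrightarrow> 1 + d \<le> Re z + real N \<Longrightarrow> t \<le> y \<Longrightarrow>
       norm (powr_diff N z (real n + y)) \<le> h n"
    using powr_diff_majorant[OF assms(1), of "1 + d" "norm x + d" N] by auto
  have "cmod ((-1) ^ n * powr_diff N y (real n + t)) \<le> cmod (of_real (h n))"
    if "y \<in> ball x d" for n y
  proof -
    have "norm (x - y) < d"
      using that by (simp add: dist_norm)
    then have "norm y \<le> norm x + d"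
      using norm_triangle_ineq4[of x "x - y"] by simp
    have "Re x - Re y < d"
      using abs_Re_le_cmod[of "x - y"] \<open>norm (x - y) < d\<close> by (simp add: abs_le_iff)
    moreover have "2 * d = Re x + real N - 1"
      unfolding d_def by simp
    ultimately have "1 + d \<le> Re y + real N"
      by linarith
    with \<open>norm y \<le> norm x + d\<close> show ?thesis
      using h(2,3) by (simp add: norm_mult norm_power)
  qed
  then show ?thesis
    using \<open>d > 0\<close> h(1,2)
    by (intro exI[of _ d] exI[of _ "\<lambda>n. complex_of_real (h n)"]) (auto simp: summable_complex_of_real)
qed

lemma alt_powr_diff_holomorphic:
  assumes "t > 0"
  shows "(\<lambda>z. alt_powr_diff N z t) holomorphic_on {z. 1 < Re z + real N}"
proof -
  define S where "S = {z::complex. 1 < Re z + real N}"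
  have "open S"
    unfolding S_def by (intro open_Collect_less continuous_intros)
  obtain g where g: "\<forall>x\<in>S. ((\<lambda>n. (-1) ^ n * powr_diff N x (real n + t)) sums g x) \<and>
      g field_differentiable (at x)"
  proof (rule series_differentiable_comparison_complex[OF \<open>open S\<close>])
    fix n x
    have "(\<lambda>x. (-1) ^ n * powr_diff N x (real n + t)) holomorphic_on UNIV"
      by (intro holomorphic_intros powr_diff_holomorphic)
    then show "(\<lambda>x. (-1) ^ n * powr_diff N x (real n + t)) field_differentiable at x"
      using holomorphic_on_imp_differentiable_at by blast
  next
    fix x assume "x \<in> S"
    then show "\<exists>d h. 0 < d \<and> summable h \<and> range h \<subseteq> \<real>\<^sub>\<ge>\<^sub>0 \<and>
        (\<forall>\<^sub>F n in sequentially. \<forall>y\<in>ball x d \<inter> S.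
           cmod ((-1) ^ n * powr_diff N y (real n + t)) \<le> cmod (h n))"
      using powr_diff_locally_dominated[OF assms, of x N] unfolding S_def
      by (fast intro: always_eventually)
  qed blast
  have "g holomorphic_on S"
    using g \<open>open S\<close> by (simp add: holomorphic_on_open field_differentiable_def)
  moreover have "g z = alt_powr_diff N z t" if "z \<in> S" for z
    using g that unfolding alt_powr_diff_def by (metis sums_unique)
  ultimately show ?thesis
    unfolding S_def[symmetric] by (rule holomorphic_transform)
qed

lemma euler_sum_holomorphic:
  assumes "t > 0"
  shows "(\<lambda>z. euler_sum N z t) holomorphic_on {z. 1 < Re z + real N}"
  unfolding euler_sum_def
  by (intro holomorphic_intros powr_diff_holomorphic alt_powr_diff_holomorphic[OF assms]) auto

(* Any K with 1 < Re z + K gives the same value, by euler_sum_eq. *)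
definition zetaE_euler :: "complex \<Rightarrow> real \<Rightarrow> complex" where
  "zetaE_euler z t = euler_sum (nat \<lceil>1 - Re z\<rceil> + 1) z t"

lemma zetaE_euler_eq_euler_sum:
  assumes "t > 0" "1 < Re z + real K"
  shows "zetaE_euler z t = euler_sum K z t"
  unfolding zetaE_euler_def by (rule euler_sum_eq[OF assms(1) _ assms(2)]) linarith

lemma zetaE_euler_holomorphic:
  assumes "t > 0"
  shows "(\<lambda>z. zetaE_euler z t) holomorphic_on UNIV"
proof -
  have "(\<lambda>z. zetaE_euler z t) field_differentiable at z0" for z0
  proof -
    define K where "K = nat \<lceil>1 - Re z0\<rceil> + 1"
    define U where "U = {z. 1 < Re z + real K}"
    have "open U" "z0 \<in> U"
      unfolding U_def K_def by (auto intro!: open_Collect_less continuous_intros) linarith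
    have "(\<lambda>z. euler_sum K z t) holomorphic_on U"
      unfolding U_def by (rule euler_sum_holomorphic[OF assms])
    moreover have "euler_sum K z t = zetaE_euler z t" if "z \<in> U" for z
      using zetaE_euler_eq_euler_sum[OF assms, of z K] that by (simp add: U_def)
    ultimately have "(\<lambda>z. zetaE_euler z t) holomorphic_on U"
      by (rule holomorphic_transform)
    then show ?thesis
      using holomorphic_on_imp_differentiable_at[OF _ \<open>open U\<close> \<open>z0 \<in> U\<close>] by blast
  qed
  then show ?thesis
    by (simp add: holomorphic_on_def field_differentiable_at_within)
qed

lemma zetaE_euler_sums:
  assumes "t > 0" "Re z > 0"
  shows "(\<lambda>n. (-1) ^ n * of_real (real n + t) powr (-z)) sums zetaE_euler z t"
  using sums_euler_sum_1[OF assms] zetaE_euler_eq_euler_sum[OF assms(1), of z 1] assms by simp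

lemma zetaE_eq_zetaE_euler:
  assumes "t > 0"
  shows "zetaE z t = zetaE_euler z t"
proof -
  \<comment> \<open>The description in zetaE_def is unique by the identity theorem on the half-plane Re w > 0.\<close>
  let ?P = "\<lambda>f. f holomorphic_on UNIV \<and>
      (\<forall>w. 0 < Re w \<longrightarrow> (\<lambda>n. (-1) ^ n * (of_real (real n + t)) powr (- w)) sums f w)"
  have "f = (\<lambda>z. zetaE_euler z t)" if "?P f" for f
  proof
    fix z
    have "open {w::complex. 0 < Re w}" "{w::complex. 0 < Re w} \<noteq> {}"
      by (auto intro!: open_Collect_less continuous_intros exI[of _ 1])
    moreover have "f w = zetaE_euler w t" if "w \<in> {w. 0 < Re w}" for w
      using \<open>?P f\<close> zetaE_euler_sums[OF assms] that sums_unique2 by blast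
    ultimately show "f z = zetaE_euler z t"
      using analytic_continuation_open[OF _ open_UNIV _ connected_UNIV subset_UNIV _
          zetaE_euler_holomorphic[OF assms]] \<open>?P f\<close> by blast
  qed
  then have "(THE f. ?P f) = (\<lambda>z. zetaE_euler z t)"
    by (rule the_equality[rotated]) (use zetaE_euler_holomorphic[OF assms] zetaE_euler_sums[OF assms] in auto)
  then show ?thesis
    unfolding zetaE_def by simp
qed

lemma zetaE_holomorphic:
  assumes "t > 0"
  shows "(\<lambda>z. zetaE z t) holomorphic_on UNIV"
  using zetaE_euler_holomorphic[OF assms] by (simp add: zetaE_eq_zetaE_euler[OF assms])

lemma zetaE_sums:
  assumes "t > 0" "Re z > 0"
  shows "(\<lambda>n. (-1) ^ n * of_real (real n + t) powr (-z)) sums zetaE z t"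
  using zetaE_euler_sums[OF assms] by (simp add: zetaE_eq_zetaE_euler[OF assms(1)])

section \<open>Differentiation with respect to q\<close>

lemma has_vector_derivative_series:
  fixes f :: "nat \<Rightarrow> real \<Rightarrow> 'b::banach"
  assumes "convex S"
    and "\<And>n x. x \<in> S \<Longrightarrow> (f n has_vector_derivative f' n x) (at x within S)"
    and "uniform_limit S (\<lambda>n x. \<Sum>i<n. f' i x) g' sequentially"
    and "x0 \<in> S" "summable (\<lambda>n. f n x0)"
  shows "\<exists>g. \<forall>x\<in>S. (\<lambda>n. f n x) sums g x \<and> (g has_vector_derivative g' x) (at x within S)"
  unfolding has_vector_derivative_def
proof (rule has_derivative_series[OF assms(1)])
  show "\<forall>\<^sub>F n in sequentially. \<forall>x\<in>S. \<forall>h. norm ((\<Sum>i<n. h *\<^sub>R f' i x) - h *\<^sub>R g' x) \<le> e * norm h"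
    if "e > 0" for e
  proof -
    obtain N where N: "\<And>n x. n \<ge> N \<Longrightarrow> x \<in> S \<Longrightarrow> norm ((\<Sum>i<n. f' i x) - g' x) < e"
      using \<open>e > 0\<close> assms(3) unfolding uniform_limit_iff eventually_at_top_linorder dist_norm by blast
    have "norm ((\<Sum>i<n. h *\<^sub>R f' i x) - h *\<^sub>R g' x) \<le> e * norm h" if "n \<ge> N" "x \<in> S" for n x h
    proof -
      have "norm ((\<Sum>i<n. h *\<^sub>R f' i x) - h *\<^sub>R g' x) = \<bar>h\<bar> * norm ((\<Sum>i<n. f' i x) - g' x)"
        by (simp add: scaleR_sum_right[symmetric] scaleR_diff_right[symmetric])
      also have "\<dots> \<le> \<bar>h\<bar> * e"
        using N[OF that] by (intro mult_left_mono) auto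
      finally show ?thesis
        by (simp add: mult.commute)
    qed
    then show ?thesis
      unfolding eventually_at_top_linorder by blast
  qed
qed (use assms in \<open>auto simp: has_vector_derivative_def\<close>)

lemma has_vector_derivative_of_difference_quotient:
  fixes c :: "real \<Rightarrow> complex"
  assumes "((\<lambda>h. (c (q + h) - c q) / of_real h) \<longlongrightarrow> L) (at 0)"
  shows "(c has_vector_derivative L) (at q)"
proof -
  have "((\<lambda>h. (Re (c (q + h)) - Re (c q)) / h) \<longlongrightarrow> Re L) (at 0)"
    using tendsto_Re[OF assms] by simp
  moreover have "((\<lambda>h. (Im (c (q + h)) - Im (c q)) / h) \<longlongrightarrow> Im L) (at 0)"
    using tendsto_Im[OF assms] by simp
  ultimately show ?thesis
    by (simp add: has_vector_derivative_complex_iff DERIV_def)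
qed

lemma norm_taylor_remainder_le:
  fixes f :: "real \<Rightarrow> 'b::real_normed_vector"
  assumes f': "\<And>t. t \<in> cball q \<delta> \<Longrightarrow> (f has_vector_derivative f' t) (at t)"
    and f'': "\<And>t. t \<in> cball q \<delta> \<Longrightarrow> (f' has_vector_derivative f'' t) (at t)"
    and bound: "\<And>t. t \<in> cball q \<delta> \<Longrightarrow> norm (f'' t) \<le> M"
    and "\<bar>h\<bar> \<le> \<delta>"
  shows "norm (f (q + h) - f q - h *\<^sub>R f' q) \<le> M * h\<^sup>2"
proof -
  have sub: "cball q \<bar>h\<bar> \<subseteq> cball q \<delta>"
    using \<open>\<bar>h\<bar> \<le> \<delta>\<close> by auto
  have "q \<in> cball q \<delta>"
    using \<open>\<bar>h\<bar> \<le> \<delta>\<close> abs_ge_zero[of h] by simp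
  then have "M \<ge> 0"
    using bound norm_ge_zero[of "f'' q"] by (meson order_trans)
  have f'_h: "(f has_vector_derivative f' t) (at t within cball q \<bar>h\<bar>)"
    and f''_h: "(f' has_vector_derivative f'' t) (at t within cball q \<bar>h\<bar>)"
    and bound_h: "norm (f'' t) \<le> M" if "t \<in> cball q \<bar>h\<bar>" for t
    using f'[OF subsetD[OF sub that]] f''[OF subsetD[OF sub that]] bound[OF subsetD[OF sub that]]
    by (auto intro: has_vector_derivative_at_within)
  have "norm (f' t - f' q) \<le> M * \<bar>h\<bar>" if "t \<in> cball q \<bar>h\<bar>" for t
  proof -
    have "norm (f' t - f' q) \<le> M * \<bar>t - q\<bar>"
      by (rule vector_differentiable_bound[OF _ f''_h bound_h]) (use that in auto)
    also have "\<dots> \<le> M * \<bar>h\<bar>"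
      using that \<open>M \<ge> 0\<close> by (intro mult_left_mono) (auto simp: dist_real_def)
    finally show ?thesis .
  qed
  moreover have "closed_segment q (q + h) \<subseteq> cball q \<bar>h\<bar>"
    by (intro closed_segment_subset) (auto simp: dist_real_def)
  ultimately have "norm (f (q + h) - f q - ((q + h) - q) *\<^sub>R f' q) \<le> norm ((q + h) - q) * (M * \<bar>h\<bar>)"
    by (intro vector_differentiable_bound_linearization[OF f'_h]) auto
  then show ?thesis
    by (simp add: power2_eq_square mult_ac)
qed

lemma uniform_limit_difference_quotient:
  fixes F F' F'' :: "'a \<Rightarrow> real \<Rightarrow> complex"
  assumes "\<delta> > 0"
    and "\<And>z t. z \<in> A \<Longrightarrow> t \<in> cball q \<delta> \<Longrightarrow> ((\<lambda>t. F z t) has_vector_derivative F' z t) (at t)"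
    and "\<And>z t. z \<in> A \<Longrightarrow> t \<in> cball q \<delta> \<Longrightarrow> ((\<lambda>t. F' z t) has_vector_derivative F'' z t) (at t)"
    and "\<And>z t. z \<in> A \<Longrightarrow> t \<in> cball q \<delta> \<Longrightarrow> norm (F'' z t) \<le> M"
  shows "uniform_limit A (\<lambda>h z. (F z (q + h) - F z q) / of_real h) (\<lambda>z. F' z q) (at 0)"
proof (rule uniform_limitI)
  fix e :: real assume "e > 0"
  define d where "d = min \<delta> (e / (\<bar>M\<bar> + 1))"
  have "d > 0"
    using \<open>e > 0\<close> \<open>\<delta> > 0\<close> by (simp add: d_def)
  have "dist ((F z (q + h) - F z q) / of_real h) (F' z q) < e"
    if "z \<in> A" "h \<noteq> 0" "\<bar>h\<bar> < d" for z h
  proof -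
    have "(F z (q + h) - F z q) / of_real h - F' z q = (F z (q + h) - F z q - h *\<^sub>R F' z q) / of_real h"
      using \<open>h \<noteq> 0\<close> by (simp add: field_simps scaleR_conv_of_real)
    then have "dist ((F z (q + h) - F z q) / of_real h) (F' z q) =
        norm (F z (q + h) - F z q - h *\<^sub>R F' z q) / \<bar>h\<bar>"
      by (simp add: dist_norm norm_divide)
    also have "\<dots> \<le> M * h\<^sup>2 / \<bar>h\<bar>"
      using that assms by (intro divide_right_mono norm_taylor_remainder_le[of q \<delta>]) (auto simp: d_def)
    also have "\<dots> = M * \<bar>h\<bar>"
      using \<open>h \<noteq> 0\<close> by (cases "h \<ge> 0") (simp_all add: power2_eq_square)
    also have "\<dots> \<le> (\<bar>M\<bar> + 1) * \<bar>h\<bar>"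
      by (intro mult_right_mono) auto
    also have "\<dots> < (\<bar>M\<bar> + 1) * (e / (\<bar>M\<bar> + 1))"
      using that by (intro mult_strict_left_mono) (auto simp: d_def)
    also have "\<dots> = e"
      by simp
    finally show ?thesis .
  qed
  then show "\<forall>\<^sub>F h in at 0. \<forall>z\<in>A. dist ((F z (q + h) - F z q) / of_real h) (F' z q) < e"
    unfolding eventually_at using \<open>d > 0\<close> by (auto simp: dist_real_def)
qed

lemma has_vector_derivative_higher_deriv_param:
  fixes F F' F'' :: "complex \<Rightarrow> real \<Rightarrow> complex"
  assumes "open A" "w \<in> A" "\<delta> > 0"
    and hol: "\<And>t. t \<in> cball q \<delta> \<Longrightarrow> (\<lambda>z. F z t) holomorphic_on A"
    and "\<And>z t. z \<in> A \<Longrightarrow> t \<in> cball q \<delta> \<Longrightarrow> ((\<lambda>t. F z t) has_vector_derivative F' z t) (at t)"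
    and "\<And>z t. z \<in> A \<Longrightarrow> t \<in> cball q \<delta> \<Longrightarrow> ((\<lambda>t. F' z t) has_vector_derivative F'' z t) (at t)"
    and "\<And>z t. z \<in> A \<Longrightarrow> t \<in> cball q \<delta> \<Longrightarrow> norm (F'' z t) \<le> M"
  shows "((\<lambda>t. (deriv ^^ j) (\<lambda>z. F z t) w) has_vector_derivative (deriv ^^ j) (\<lambda>z. F' z q) w) (at q)"
proof (rule has_vector_derivative_of_difference_quotient)
  \<comment> \<open>The difference quotients in t are holomorphic in z and converge uniformly on A,
    so their z-derivatives converge as well.\<close>
  define D where "D = (\<lambda>h z. (F z (q + h) - F z q) / of_real h)"
  have near: "\<forall>\<^sub>F h in at 0. q + h \<in> cball q \<delta>"
    unfolding eventually_at using \<open>\<delta> > 0\<close> by (auto simp: dist_real_def intro!: exI[of _ \<delta>])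
  have hol_diff: "(\<lambda>z. F z (q + h) - F z q) holomorphic_on A" if "q + h \<in> cball q \<delta>" for h
    using that \<open>\<delta> > 0\<close> by (intro holomorphic_intros hol) auto
  have "((\<lambda>h. (deriv ^^ j) (D h) w) \<longlongrightarrow> (deriv ^^ j) (\<lambda>z. F' z q) w) (at 0)"
  proof (rule higher_deriv_complex_uniform_limit[OF _ _ _ \<open>open A\<close> \<open>w \<in> A\<close>])
    show "uniform_limit A D (\<lambda>z. F' z q) (at 0)"
      unfolding D_def by (rule uniform_limit_difference_quotient[where F''=F'' and M=M]) (use assms in auto)
    show "\<forall>\<^sub>F h in at 0. D h holomorphic_on A"
      using near by eventually_elim
        (use \<open>\<delta> > 0\<close> in \<open>auto simp: D_def divide_inverse intro!: holomorphic_intros hol\<close>)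
  qed simp
  moreover have "\<forall>\<^sub>F h in at 0. (deriv ^^ j) (D h) w =
      ((deriv ^^ j) (\<lambda>z. F z (q + h)) w - (deriv ^^ j) (\<lambda>z. F z q) w) / of_real h"
    using near
  proof eventually_elim
    case (elim h)
    have "D h = (\<lambda>z. inverse (of_real h) * (F z (q + h) - F z q))"
      by (simp add: D_def divide_inverse mult.commute)
    then have "(deriv ^^ j) (D h) w = inverse (of_real h) * (deriv ^^ j) (\<lambda>z. F z (q + h) - F z q) w"
      using higher_deriv_cmult[OF hol_diff[OF elim] \<open>w \<in> A\<close> \<open>open A\<close>] by simp
    also have "(deriv ^^ j) (\<lambda>z. F z (q + h) - F z q) w =
        (deriv ^^ j) (\<lambda>z. F z (q + h)) w - (deriv ^^ j) (\<lambda>z. F z q) w"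
      using higher_deriv_diff[OF hol[OF elim] hol assms(1,2)] \<open>\<delta> > 0\<close> by simp
    finally show ?case
      by (simp add: divide_inverse mult.commute)
  qed
  ultimately show "((\<lambda>h. ((deriv ^^ j) (\<lambda>z. F z (q + h)) w - (deriv ^^ j) (\<lambda>z. F z q) w) / of_real h)
      \<longlongrightarrow> (deriv ^^ j) (\<lambda>z. F' z q) w) (at 0)"
    by (rule Lim_transform_eventually)
qed

lemma zetaE_bounded:
  assumes "a > 0" "s > 1"
  shows "\<exists>M\<ge>0. \<forall>w t. norm w \<le> R \<longrightarrow> s \<le> Re w \<longrightarrow> a \<le> t \<longrightarrow> norm (zetaE w t) \<le> M"
proof -
  obtain h where h: "summable h" "\<And>n. 0 \<le> h n"
    "\<And>n w t. norm w \<le> R \<Longrightarrow> s \<le> Re w \<Longrightarrow> a \<le> t \<Longrightarrow> norm (powr_diff 0 w (real n + t)) \<le> h n"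
    using powr_diff_majorant[OF assms, of R 0] by auto
  have "norm (zetaE w t) \<le> suminf h" if "norm w \<le> R" "s \<le> Re w" "a \<le> t" for w t
  proof -
    have "(\<lambda>n. (-1) ^ n * powr_diff 0 w (real n + t)) sums zetaE w t"
      using zetaE_sums[of t w] that assms by simp
    then have "zetaE w t = (\<Sum>n. (-1) ^ n * powr_diff 0 w (real n + t))"
      by (rule sums_unique)
    also have "norm \<dots> \<le> suminf h"
      by (rule norm_suminf_le) (use h that in \<open>auto simp: norm_mult norm_power\<close>)
    finally show ?thesis .
  qed
  moreover have "suminf h \<ge> 0"
    using h by (simp add: suminf_nonneg)
  ultimately show ?thesis
    by blast
qed

lemma zetaE_has_vector_derivative:
  assumes "t0 > 0" "Re z > 0"
  shows "((\<lambda>t. zetaE z t) has_vector_derivative (-z * zetaE (z + 1) t0)) (at t0)"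
proof -
  \<comment> \<open>Termwise differentiation: the differentiated series is that of zetaE (z + 1), which
    converges uniformly for t > t0/2 since Re (z + 1) > 1.\<close>
  define S where "S = {t0/2<..}"
  have "open S" "convex S" "t0 \<in> S"
    using assms by (auto simp: S_def)
  define f where "f n t = (-1) ^ n * powr_diff 0 z (real n + t)" for n t
  define f' where "f' n t = (-1) ^ n * (-z * powr_diff 0 (z + 1) (real n + t))" for n t
  have "(f n has_vector_derivative f' n t) (at t within S)" if "t \<in> S" for n t
  proof -
    have "0 < real n + t"
      using that assms by (simp add: S_def)
    from powr_diff_has_vector_derivative[OF this, of 0 z] show ?thesis
      unfolding f_def f'_def by (intro has_vector_derivative_at_within[OF has_vector_derivative_mult_right])
  qed
  moreover obtain h where h: "summable h" "\<And>n w t. norm w \<le> norm z + 1 \<Longrightarrow> 1 + Re z \<le> Re w \<Longrightarrow>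
      t0 / 2 \<le> t \<Longrightarrow> norm (powr_diff 0 w (real n + t)) \<le> h n"
    using powr_diff_majorant[of "t0 / 2" "1 + Re z" "norm z + 1" 0] assms by auto
  have "uniform_limit S (\<lambda>n t. \<Sum>i<n. f' i t) (\<lambda>t. \<Sum>i. f' i t) sequentially"
  proof (rule Weierstrass_m_test[of _ _ "\<lambda>n. norm z * h n"])
    fix n t assume "t \<in> S"
    have "norm (powr_diff 0 (z + 1) (real n + t)) \<le> h n"
      using h(2)[of "z + 1" t n] \<open>t \<in> S\<close> norm_triangle_ineq[of z 1] by (simp add: S_def)
    then show "norm (f' n t) \<le> norm z * h n"
      unfolding f'_def by (simp add: norm_mult norm_power mult_left_mono)
  qed (use h(1) in \<open>rule summable_mult\<close>)
  moreover have "summable (\<lambda>n. f n t0)"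
    using zetaE_sums[OF assms] unfolding f_def by (simp add: sums_summable)
  ultimately obtain g where
    g: "\<forall>t\<in>S. (\<lambda>n. f n t) sums g t \<and> (g has_vector_derivative (\<Sum>i. f' i t)) (at t within S)"
    using has_vector_derivative_series[OF \<open>convex S\<close> _ _ \<open>t0 \<in> S\<close>] by blast
  have "(\<lambda>i. f' i t0) sums (-z * zetaE (z + 1) t0)"
    unfolding f'_def using sums_mult[OF zetaE_sums[of t0 "z + 1"], of "-z"] assms by (simp add: mult_ac)
  moreover from g \<open>t0 \<in> S\<close> have "(g has_vector_derivative (\<Sum>i. f' i t0)) (at t0 within S)"
    by blast
  ultimately have "(g has_vector_derivative (-z * zetaE (z + 1) t0)) (at t0)"
    by (simp add: sums_unique[symmetric] at_within_open[OF \<open>t0 \<in> S\<close> \<open>open S\<close>])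
  moreover have "g t = zetaE z t" if "t \<in> S" for t
    using g that zetaE_sums[of t z] assms sums_unique2 by (fastforce simp: S_def f_def)
  ultimately show ?thesis
    by (rule has_vector_derivative_transform_within_open[OF _ \<open>open S\<close> \<open>t0 \<in> S\<close>])
qed

lemma higher_deriv_zetaE_has_vector_derivative:
  assumes "q > 0"
  shows "((\<lambda>t. (deriv ^^ j) (\<lambda>z. zetaE z t) 1) has_vector_derivative
           (deriv ^^ j) (\<lambda>z. -z * zetaE (z + 1) q) 1) (at q)"
proof -
  define A where "A = {z. 1/2 < Re z \<and> norm z < 3/2}"
  have t: "q/2 \<le> t" "0 < t" if "t \<in> cball q (q/2)" for t
    using that abs_ge_self[of "q - t"] assms unfolding mem_cball dist_real_def by linarith+
  obtain M where "M \<ge> 0"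
    and M: "\<And>w t. norm w \<le> 7/2 \<Longrightarrow> 5/2 \<le> Re w \<Longrightarrow> q/2 \<le> t \<Longrightarrow> norm (zetaE w t) \<le> M"
    using zetaE_bounded[of "q/2" "5/2" "7/2"] assms by auto
  show ?thesis
  proof (rule has_vector_derivative_higher_deriv_param[where A=A and \<delta>="q/2" and M="4 * M"
        and F="\<lambda>z t. zetaE z t" and F'="\<lambda>z t. -z * zetaE (z + 1) t"
        and F''="\<lambda>z t. -z * (-(z + 1) * zetaE (z + 1 + 1) t)"])
    show "open A" "1 \<in> A" "q/2 > 0"
      unfolding A_def using assms by (auto intro!: open_Collect_conj open_Collect_less continuous_intros)
    show "(\<lambda>z. zetaE z t) holomorphic_on A" if "t \<in> cball q (q/2)" for t
      using zetaE_holomorphic[OF t(2)[OF that]] by (rule holomorphic_on_subset) simp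
    fix z t assume z: "z \<in> A" and "t \<in> cball q (q/2)"
    note t = t[OF this(2)]
    show "((\<lambda>t. zetaE z t) has_vector_derivative -z * zetaE (z + 1) t) (at t)"
      using z t by (intro zetaE_has_vector_derivative) (auto simp: A_def)
    show "((\<lambda>t. -z * zetaE (z + 1) t) has_vector_derivative -z * (-(z + 1) * zetaE (z + 1 + 1) t)) (at t)"
      using z t by (intro has_vector_derivative_mult_right zetaE_has_vector_derivative) (auto simp: A_def)
    have "norm (z + 1) \<le> 5/2" "norm (z + 1 + 1) \<le> 7/2"
      using z norm_triangle_ineq[of z 1] norm_triangle_ineq[of "z + 1" 1] by (auto simp: A_def)
    then have "norm z * (norm (z + 1) * norm (zetaE (z + 1 + 1) t)) \<le> 3/2 * (5/2 * M)"
      using z t \<open>M \<ge> 0\<close> by (intro mult_mono M) (auto simp: A_def)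
    then show "norm (-z * (-(z + 1) * zetaE (z + 1 + 1) t)) \<le> 4 * M"
      using \<open>M \<ge> 0\<close> unfolding norm_mult norm_minus_cancel by linarith
  qed
qed

section \<open>Taylor expansion at z = 1\<close>

lemma higher_deriv_mult_ident:
  assumes "g holomorphic_on S" "open S" "z \<in> S"
  shows "(deriv ^^ n) (\<lambda>w. w * g w) z = z * (deriv ^^ n) g z + of_nat n * (deriv ^^ (n - 1)) g z"
proof (cases n)
  case (Suc m)
  have "(deriv ^^ n) (\<lambda>w. w * g w) z =
      (\<Sum>i = 0..n. of_nat (n choose i) * (deriv ^^ i) (\<lambda>w. w) z * (deriv ^^ (n - i)) g z)"
    by (rule higher_deriv_mult) (use assms in \<open>auto intro: holomorphic_intros\<close>)
  also have "\<dots> = (\<Sum>i = 0..n. (if i = 0 then z * (deriv ^^ n) g z else 0) +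
      (if i = 1 then of_nat n * (deriv ^^ (n - 1)) g z else 0))"
    by (rule sum.cong) auto
  also have "\<dots> = z * (deriv ^^ n) g z + of_nat n * (deriv ^^ (n - 1)) g z"
    using Suc by (simp add: sum.distrib)
  finally show ?thesis .
qed simp

lemma higher_deriv_neg_ident_mult_shift:
  assumes "g holomorphic_on UNIV"
  shows "(deriv ^^ n) (\<lambda>w. -w * g (w + 1)) z =
           - (z * (deriv ^^ n) g (z + 1) + of_nat n * (deriv ^^ (n - 1)) g (z + 1))"
proof -
  have "((\<lambda>w. g w) \<circ> (\<lambda>w. w + 1)) holomorphic_on UNIV"
    by (rule holomorphic_on_compose_gen[OF _ assms]) (auto intro: holomorphic_intros)
  then have hol: "(\<lambda>w. g (w + 1)) holomorphic_on UNIV"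
    by (simp add: o_def)
  have shift: "(deriv ^^ k) (\<lambda>w. g (w + 1)) z = (deriv ^^ k) g (z + 1)" for k
    using higher_deriv_compose_linear'[OF assms open_UNIV open_UNIV, of z 1 1] by simp
  have "(deriv ^^ n) (\<lambda>w. -1 * (w * g (w + 1))) z = -1 * (deriv ^^ n) (\<lambda>w. w * g (w + 1)) z"
    by (rule higher_deriv_cmult[where A=UNIV]) (use hol in \<open>auto intro: holomorphic_intros\<close>)
  then show ?thesis
    using higher_deriv_mult_ident[OF hol open_UNIV UNIV_I, of n] by (simp add: shift)
qed

lemma higher_deriv_power_series_entire:
  assumes "g holomorphic_on UNIV"
  shows "(\<lambda>n. (deriv ^^ (n + m)) g a / fact n * (b - a) ^ n) sums (deriv ^^ m) g b"
proof -
  have "(deriv ^^ m) g holomorphic_on ball a (norm (b - a) + 1)"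
    using holomorphic_higher_deriv[OF assms open_UNIV] by (rule holomorphic_on_subset) simp
  from holomorphic_power_series[OF this, of b] show ?thesis
    by (simp add: dist_norm norm_minus_commute funpow_add)
qed

lemma sums_of_nat_mult_div_fact:
  fixes c :: "nat \<Rightarrow> 'a::real_normed_field"
  assumes "(\<lambda>n. c (Suc n) / fact n) sums A"
  shows "(\<lambda>n. of_nat n * (c n / fact n)) sums A"
proof -
  have "(\<lambda>n. of_nat (Suc n) * (c (Suc n) / fact (Suc n))) sums A"
    using assms by (simp add: fact_Suc field_simps del: of_nat_Suc)
  from sums_Suc[OF this] show ?thesis
    by simp
qed

lemma binomial_div_fact:
  "(of_nat ((m + p + 1) choose Suc p) / fact (m + p) :: 'a::field_char_0) =
     of_nat (m + p + 1) / (fact (Suc p) * fact m)"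
proof -
  have "(of_nat ((m + p + 1) choose Suc p) :: 'a) = fact (m + p + 1) / (fact (Suc p) * fact m)"
    using binomial_fact[of "Suc p" "m + p + 1"] by simp
  also have "(fact (m + p + 1) :: 'a) = of_nat (m + p + 1) * fact (m + p)"
    by (simp add: algebra_simps)
  finally show ?thesis
    by (simp add: divide_divide_eq_left mult.commute)
qed

lemma gamma_tilde_has_vector_derivative:
  assumes "q > 0"
  shows "((\<lambda>t. gamma_tilde j t) has_vector_derivative
           (-1) ^ Suc j * ((deriv ^^ j) (\<lambda>z. zetaE z q) 2 +
                         of_nat j * (deriv ^^ (j - 1)) (\<lambda>z. zetaE z q) 2)) (at q)"
proof -
  have shifted: "(deriv ^^ j) (\<lambda>z. -z * zetaE (z + 1) q) 1 =
      - ((deriv ^^ j) (\<lambda>z. zetaE z q) 2 + of_nat j * (deriv ^^ (j - 1)) (\<lambda>z. zetaE z q) 2)"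
    using higher_deriv_neg_ident_mult_shift[OF zetaE_holomorphic[OF assms], of j 1] by simp
  have "(-1) ^ j * (deriv ^^ j) (\<lambda>z. -z * zetaE (z + 1) q) 1 =
      (-1) ^ Suc j * ((deriv ^^ j) (\<lambda>z. zetaE z q) 2 + of_nat j * (deriv ^^ (j - 1)) (\<lambda>z. zetaE z q) 2)"
    unfolding shifted by (simp add: algebra_simps)
  with has_vector_derivative_mult_right[OF higher_deriv_zetaE_has_vector_derivative[OF assms, of j],
      of "(-1) ^ j"]
  show ?thesis
    unfolding gamma_tilde_def by simp
qed

lemma gamma_tilde_sums:
  assumes "q > 0"
  shows "(\<lambda>k. (-1) ^ k / fact k * gamma_tilde k q) sums zetaE 2 q"
  using higher_deriv_power_series_entire[OF zetaE_holomorphic[OF assms], of 0 1 2]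
  by (simp add: gamma_tilde_def)

lemma gamma_tilde_sums_binomial:
  assumes "q > 0"
  shows "(\<lambda>n. (-1) ^ (n + p) / fact (n + p) * of_nat ((n + p + 1) choose Suc p) * gamma_tilde (n + p) q)
           sums (((deriv ^^ Suc p) (\<lambda>z. zetaE z q) 2 + of_nat (Suc p) * (deriv ^^ p) (\<lambda>z. zetaE z q) 2)
                 / fact (Suc p))"
proof -
  define c where "c k = (deriv ^^ k) (\<lambda>z. zetaE z q) 1" for k
  have taylor: "(\<lambda>n. c (n + m) / fact n) sums (deriv ^^ m) (\<lambda>z. zetaE z q) 2" for m
    using higher_deriv_power_series_entire[OF zetaE_holomorphic[OF assms], of m 1 2] by (simp add: c_def)
  have "(\<lambda>n. of_nat n * (c (n + p) / fact n)) sums (deriv ^^ Suc p) (\<lambda>z. zetaE z q) 2"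
    using sums_of_nat_mult_div_fact[of "\<lambda>n. c (n + p)"] taylor[of "Suc p"] by simp
  then have "(\<lambda>n. (of_nat n * (c (n + p) / fact n) + of_nat (Suc p) * (c (n + p) / fact n)) / fact (Suc p))
      sums (((deriv ^^ Suc p) (\<lambda>z. zetaE z q) 2 + of_nat (Suc p) * (deriv ^^ p) (\<lambda>z. zetaE z q) 2)
            / fact (Suc p))"
    by (intro sums_divide sums_add sums_mult taylor)
  moreover have "(-1) ^ (n + p) / fact (n + p) * of_nat ((n + p + 1) choose Suc p) * gamma_tilde (n + p) q =
      (of_nat n * (c (n + p) / fact n) + of_nat (Suc p) * (c (n + p) / fact n)) / fact (Suc p)" for n
  proof -
    have "(-1) ^ (n + p) / fact (n + p) * of_nat ((n + p + 1) choose Suc p) * gamma_tilde (n + p) q =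
        of_nat ((n + p + 1) choose Suc p) / fact (n + p) * c (n + p)"
      by (simp add: gamma_tilde_def c_def)
    also have "\<dots> = of_nat (n + p + 1) / (fact (Suc p) * fact n) * c (n + p)"
      by (simp only: binomial_div_fact)
    also have "\<dots> = (of_nat n * (c (n + p) / fact n) + of_nat (Suc p) * (c (n + p) / fact n)) / fact (Suc p)"
      by (simp add: field_simps)
    finally show ?thesis .
  qed
  ultimately show ?thesis
    by simp
qed

theorem proposition3p23:
  fixes q :: real
  assumes "q > 0"
  shows "(\<forall>j::nat. j \<ge> 1 \<longrightarrow>
           (\<exists>D L. ((\<lambda>x. gamma_tilde j x) has_vector_derivative D) (at q) \<and>
              (\<lambda>n. (-1) ^ (n + (j - 1)) / fact (n + (j - 1))
                     * of_nat ((n + (j - 1) + 1) choose j) * gamma_tilde (n + (j - 1)) q) sums L \<and>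
              (-1) ^ j / fact j * D = - L))
       \<and> (\<exists>D L. (psi_tilde has_vector_derivative D) (at q) \<and>
              (\<lambda>k. (-1) ^ k / fact k * gamma_tilde k q) sums L \<and>
              - D = - L)"
proof (intro conjI allI impI)
  fix j :: nat assume "j \<ge> 1"
  then obtain p where j: "j = Suc p"
    by (cases j) auto
  let ?X = "(deriv ^^ j) (\<lambda>z. zetaE z q) 2 + of_nat j * (deriv ^^ (j - 1)) (\<lambda>z. zetaE z q) 2"
  have "(-1) ^ j / fact j * ((-1) ^ Suc j * ?X) = - (?X / fact j)"
    by simp
  then show "\<exists>D L. ((\<lambda>x. gamma_tilde j x) has_vector_derivative D) (at q) \<and>
      (\<lambda>n. (-1) ^ (n + (j - 1)) / fact (n + (j - 1))
             * of_nat ((n + (j - 1) + 1) choose j) * gamma_tilde (n + (j - 1)) q) sums L \<and>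
      (-1) ^ j / fact j * D = - L"
    using gamma_tilde_has_vector_derivative[OF assms, of j] gamma_tilde_sums_binomial[OF assms, of p]
    unfolding j by auto
next
  have "(psi_tilde has_vector_derivative zetaE 2 q) (at q)"
    using has_vector_derivative_minus[OF gamma_tilde_has_vector_derivative[OF assms, of 0]]
    by (simp add: psi_tilde_def[abs_def])
  then show "\<exists>D L. (psi_tilde has_vector_derivative D) (at q) \<and>
      (\<lambda>k. (-1) ^ k / fact k * gamma_tilde k q) sums L \<and> - D = - L"
    using gamma_tilde_sums[OF assms] by blast
qed

end
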